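(* Let $\mathcal{X},\mathcal{Y}$ be finite sets, $P_X$ a probability distribution on $\mathcal{X}$, $d:\mathcal{X}\times\mathcal{Y}\to[0,\infty)$, and $z\in(0,1]$. Then the map $Q_Y\mapsto\tilde D(z,Q_Y)$ is convex on the set of probability distributions on $\mathcal{Y}$.
   Context: $p_{c,x,y,u}=Q_Y\{y': d(x,y')<d(x,y)\}+u\cdot Q_Y\{y': d(x,y')=d(x,y)\}$; $\tilde D(z,Q_Y)=z^{-1}\mathbb{E}[d(X,Y)\mathbf{1}\{p_{c,X,Y,U}\le z\}]$ with $X\sim P_X$, $Y\sim Q_Y$, $U$ uniform on $[0,1]$ independent. *)

theory Defs
  imports "HOL-Analysis.Analysis"
begin

definition is_dist :: "('a::finite \<Rightarrow> real) \<Rightarrow> bool" where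
  "is_dist q \<longleftrightarrow> (\<forall>a. q a \<ge> 0) \<and> (\<Sum>a\<in>UNIV. q a) = 1"

definition dist_prob :: "('a::finite \<Rightarrow> real) \<Rightarrow> 'a set \<Rightarrow> real" where
  "dist_prob q A = (\<Sum>a\<in>A. q a)"

definition p_c :: "('x \<Rightarrow> 'y::finite \<Rightarrow> real) \<Rightarrow> ('y \<Rightarrow> real) \<Rightarrow> 'x \<Rightarrow> 'y \<Rightarrow> real \<Rightarrow> real" where
  "p_c d Q x y u = dist_prob Q {y'. d x y' < d x y} + u * dist_prob Q {y'. d x y' = d x y}"

text \<open>\tilde D(z,Q) = z^{-1} E[d(X,Y) 1{p_{c,X,Y,U} \<le> z}], X ~ P, Y ~ Q, U ~ Unif[0,1] independent.
  The expectation over U is the Lebesgue measure of the event within [0,1].\<close>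
definition Dtilde :: "('x::finite \<Rightarrow> real) \<Rightarrow> ('x \<Rightarrow> 'y::finite \<Rightarrow> real) \<Rightarrow> real \<Rightarrow> ('y \<Rightarrow> real) \<Rightarrow> real" where
  "Dtilde P d z Q = inverse z * (\<Sum>x\<in>UNIV. \<Sum>y\<in>UNIV. P x * Q y * d x y *
      measure lborel {u \<in> {0..1}. p_c d Q x y u \<le> z})"

end

theory Submission
  imports Defs
begin

text \<open>For fixed \<open>x\<close>, the weights \<open>w y = Q y * Pr\<^sub>U (p\<^sub>c x y U \<le> z)\<close> satisfy
  \<open>0 \<le> w \<le> Q\<close> and \<open>\<Sum> w = z\<close>, and they fill the mass \<open>z\<close> greedily in order of increasing
  \<open>d x\<close>: full weight below the \<open>z\<close>-quantile of \<open>d x\<close> under \<open>Q\<close>, none above it, and the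
  uniform tie-breaking variable \<open>U\<close> spends exactly the remainder at the quantile itself.
  By the bathtub principle such weights minimise \<open>\<Sum>\<^sub>y v y * d x y\<close> over all \<open>v\<close> with
  \<open>0 \<le> v \<le> Q\<close> and \<open>\<Sum> v = z\<close>. These constraints are linear jointly in \<open>(Q, v)\<close>, so mixing
  the optimal weights of \<open>Q\<^sub>1\<close> and \<open>Q\<^sub>2\<close> gives admissible weights for the mixture; hence
  the minimum, and with it \<open>Dtilde\<close>, is convex in \<open>Q\<close>.\<close>

lemma measure_affine_le_le_one:
  fixes a b z :: real
  shows "measure lborel {u \<in> {0..1}. a + u * b \<le> z} \<le> 1"
proof -
  have "{u \<in> {0..1}. a + u * b \<le> z} \<in> sets lborel" by measurable
  then have "measure lborel {u \<in> {0..1}. a + u * b \<le> z} \<le> measure lborel {0..1::real}"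
    by (intro measure_mono_fmeasurable fmeasurable_compact) auto
  then show ?thesis by simp
qed

lemma mult_measure_affine_le:
  fixes a b z :: real
  assumes "0 < b"
  shows "b * measure lborel {u \<in> {0..1}. a + u * b \<le> z} = min z (a + b) - min z a"
proof -
  define m where "m = min 1 ((z - a) / b)"
  have "{u \<in> {0..1}. a + u * b \<le> z} = {0..m}"
    using assms by (auto simp: m_def le_divide_eq algebra_simps)
  then have "measure lborel {u \<in> {0..1}. a + u * b \<le> z} = (if 0 \<le> m then m else 0)"
    by simp
  moreover consider "z \<le> a" | "a < z" "z < a + b" | "a + b \<le> z" by linarith
  then have "b * (if 0 \<le> m then m else 0) = min z (a + b) - min z a"
    by cases (use assms in \<open>auto simp: m_def divide_le_eq le_divide_eq min_def\<close>)
  ultimately show ?thesis by simp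
qed

lemma bathtub_sum_le:
  fixes w v Q c :: "'a \<Rightarrow> real"
  assumes "finite A"
    and below: "\<And>y. y \<in> A \<Longrightarrow> c y < r \<Longrightarrow> w y = Q y"
    and above: "\<And>y. y \<in> A \<Longrightarrow> r < c y \<Longrightarrow> w y = 0"
    and v: "\<And>y. y \<in> A \<Longrightarrow> 0 \<le> v y" "\<And>y. y \<in> A \<Longrightarrow> v y \<le> Q y"
    and mass: "sum w A = sum v A"
  shows "(\<Sum>y\<in>A. w y * c y) \<le> (\<Sum>y\<in>A. v y * c y)"
proof -
  have "(w y - v y) * (c y - r) \<le> 0" if "y \<in> A" for y
    using below[OF that] above[OF that] v[OF that]
    by (cases "c y < r"; cases "r < c y") (auto simp: mult_le_0_iff)
  then have "(\<Sum>y\<in>A. (w y - v y) * (c y - r)) \<le> 0"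
    by (rule sum_nonpos)
  moreover have "(\<Sum>y\<in>A. w y * c y) - (\<Sum>y\<in>A. v y * c y)
      = (\<Sum>y\<in>A. (w y - v y) * (c y - r)) + r * (sum w A - sum v A)"
    by (simp add: left_diff_distrib right_diff_distrib sum_subtractf sum_distrib_left mult_ac)
  ultimately show ?thesis using mass by simp
qed

lemma is_dist_nonneg: "is_dist Q \<Longrightarrow> 0 \<le> Q y"
  by (simp add: is_dist_def)

lemma is_dist_convex_comb:
  assumes "is_dist Q1" "is_dist Q2" "0 \<le> t" "t \<le> 1"
  shows "is_dist (\<lambda>y. t * Q1 y + (1 - t) * Q2 y)"
  using assms by (simp add: is_dist_def sum.distrib flip: sum_distrib_left)

lemma dist_prob_mono: "is_dist Q \<Longrightarrow> A \<subseteq> B \<Longrightarrow> dist_prob Q A \<le> dist_prob Q B"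
  unfolding dist_prob_def by (rule sum_mono2) (auto simp: is_dist_nonneg)

lemma dist_prob_nonneg: "is_dist Q \<Longrightarrow> 0 \<le> dist_prob Q A"
  using dist_prob_mono[of Q "{}" A] by (simp add: dist_prob_def)

lemma le_dist_prob: "is_dist Q \<Longrightarrow> y \<in> A \<Longrightarrow> Q y \<le> dist_prob Q A"
  using dist_prob_mono[of Q "{y}" A] by (simp add: dist_prob_def)

lemma dist_prob_le_eq_less_plus_eq:
  fixes c :: "'y::finite \<Rightarrow> real"
  shows "dist_prob Q {y. c y \<le> r} = dist_prob Q {y. c y < r} + dist_prob Q {y. c y = r}"
proof -
  have "{y. c y \<le> r} = {y. c y < r} \<union> {y. c y = r}" by auto
  moreover have "sum Q ({y. c y < r} \<union> {y. c y = r}) = sum Q {y. c y < r} + sum Q {y. c y = r}"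
    by (rule sum.union_disjoint) auto
  ultimately show ?thesis
    unfolding dist_prob_def by simp
qed

definition quantile :: "('y::finite \<Rightarrow> real) \<Rightarrow> ('y \<Rightarrow> real) \<Rightarrow> real \<Rightarrow> real" where
  "quantile c Q z = Min {r \<in> range c. z \<le> dist_prob Q {y. c y \<le> r}}"

lemma quantile_le:
  "r \<in> range c \<Longrightarrow> z \<le> dist_prob Q {y. c y \<le> r} \<Longrightarrow> quantile c Q z \<le> r"
  unfolding quantile_def by (rule Min_le) auto

lemma quantile_mem:
  fixes c :: "'y::finite \<Rightarrow> real"
  assumes "is_dist Q" "z \<le> 1"
  shows "quantile c Q z \<in> range c" "z \<le> dist_prob Q {y. c y \<le> quantile c Q z}"
proof -
  have "Max (range c) \<in> range c" by (rule Max_in) auto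
  moreover have "{y. c y \<le> Max (range c)} = UNIV" by auto
  ultimately have "Max (range c) \<in> {r \<in> range c. z \<le> dist_prob Q {y. c y \<le> r}}"
    using assms by (simp add: dist_prob_def is_dist_def)
  then have "{r \<in> range c. z \<le> dist_prob Q {y. c y \<le> r}} \<noteq> {}"
    by blast
  then have "quantile c Q z \<in> {r \<in> range c. z \<le> dist_prob Q {y. c y \<le> r}}"
    unfolding quantile_def by (intro Min_in) auto
  then show "quantile c Q z \<in> range c" "z \<le> dist_prob Q {y. c y \<le> quantile c Q z}"
    by auto
qed

lemma dist_prob_less_quantile:
  fixes c :: "'y::finite \<Rightarrow> real"
  assumes "0 \<le> z"
  shows "dist_prob Q {y. c y < quantile c Q z} \<le> z"
proof (rule ccontr)
  define S where "S = {y. c y < quantile c Q z}"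
  assume "\<not> dist_prob Q S \<le> z"
  then have "S \<noteq> {}"
    using assms by (auto simp: dist_prob_def)
  define r where "r = Max (c ` S)"
  have "r \<in> c ` S" unfolding r_def using \<open>S \<noteq> {}\<close> by (intro Max_in) auto
  then have "r < quantile c Q z" by (auto simp: S_def)
  have "{y. c y \<le> r} = S"
    using \<open>r < quantile c Q z\<close> by (auto simp: S_def r_def)
  then have "quantile c Q z \<le> r"
    using \<open>\<not> dist_prob Q S \<le> z\<close> \<open>r \<in> c ` S\<close> by (intro quantile_le) auto
  then show False using \<open>r < quantile c Q z\<close> by simp
qed

definition acceptance :: "('x \<Rightarrow> 'y::finite \<Rightarrow> real) \<Rightarrow> ('y \<Rightarrow> real) \<Rightarrow> real \<Rightarrow> 'x \<Rightarrow> 'y \<Rightarrow> real" where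
  "acceptance d Q z x y = measure lborel {u \<in> {0..1}. p_c d Q x y u \<le> z}"

lemma acceptance_nonneg: "0 \<le> acceptance d Q z x y"
  by (simp add: acceptance_def)

lemma acceptance_le_one: "acceptance d Q z x y \<le> 1"
  unfolding acceptance_def p_c_def by (rule measure_affine_le_le_one)

lemma acceptance_cong: "d x y = d x y' \<Longrightarrow> acceptance d Q z x y = acceptance d Q z x y'"
  by (simp add: acceptance_def p_c_def)

lemma mult_acceptance:
  fixes d :: "'x \<Rightarrow> 'y::finite \<Rightarrow> real"
  assumes "is_dist Q"
  shows "dist_prob Q {y'. d x y' = d x y} * acceptance d Q z x y
    = min z (dist_prob Q {y'. d x y' \<le> d x y}) - min z (dist_prob Q {y'. d x y' < d x y})"
proof (cases "dist_prob Q {y'. d x y' = d x y} = 0")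
  case True
  then show ?thesis by (simp add: dist_prob_le_eq_less_plus_eq)
next
  case False
  then have "0 < dist_prob Q {y'. d x y' = d x y}"
    using dist_prob_nonneg[OF assms] by (simp add: order_less_le)
  from mult_measure_affine_le[OF this] show ?thesis
    by (simp add: acceptance_def p_c_def dist_prob_le_eq_less_plus_eq add.commute)
qed

lemma dist_prob_level_pos:
  fixes c :: "'y::finite \<Rightarrow> real"
  assumes "is_dist Q" "Q y \<noteq> 0"
  shows "0 < dist_prob Q {y'. c y' = c y}"
  using le_dist_prob[OF assms(1), of y "{y'. c y' = c y}"] is_dist_nonneg[OF assms(1), of y]
    assms(2)
  by simp

lemma acceptance_below_quantile:
  fixes d :: "'x \<Rightarrow> 'y::finite \<Rightarrow> real"
  assumes Q: "is_dist Q" and "d x y < quantile (d x) Q z"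
  shows "Q y * acceptance d Q z x y = Q y"
proof (cases "Q y = 0")
  case False
  have "\<not> z \<le> dist_prob Q {y'. d x y' \<le> d x y}"
    using quantile_le[of "d x y" "d x" z Q] assms(2) by auto
  moreover have "dist_prob Q {y'. d x y' < d x y} \<le> dist_prob Q {y'. d x y' \<le> d x y}"
    using Q by (intro dist_prob_mono) auto
  ultimately have "dist_prob Q {y'. d x y' = d x y} * acceptance d Q z x y
      = dist_prob Q {y'. d x y' \<le> d x y} - dist_prob Q {y'. d x y' < d x y}"
    by (simp add: mult_acceptance[OF Q])
  also have "\<dots> = dist_prob Q {y'. d x y' = d x y}"
    by (simp add: dist_prob_le_eq_less_plus_eq)
  finally show ?thesis
    using dist_prob_level_pos[OF Q False, of "d x"] by simp
qed simp

lemma acceptance_above_quantile: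
  fixes d :: "'x \<Rightarrow> 'y::finite \<Rightarrow> real"
  assumes Q: "is_dist Q" and "z \<le> 1" and "quantile (d x) Q z < d x y"
  shows "Q y * acceptance d Q z x y = 0"
proof (cases "Q y = 0")
  case False
  have "z \<le> dist_prob Q {y'. d x y' \<le> quantile (d x) Q z}"
    using quantile_mem[OF Q \<open>z \<le> 1\<close>] by simp
  also have "\<dots> \<le> dist_prob Q {y'. d x y' < d x y}"
    using Q assms(3) by (intro dist_prob_mono) auto
  finally have "z \<le> dist_prob Q {y'. d x y' < d x y}" .
  moreover have "dist_prob Q {y'. d x y' < d x y} \<le> dist_prob Q {y'. d x y' \<le> d x y}"
    using Q by (intro dist_prob_mono) auto
  ultimately have "dist_prob Q {y'. d x y' = d x y} * acceptance d Q z x y = 0"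
    by (simp add: mult_acceptance[OF Q])
  then show ?thesis
    using dist_prob_level_pos[OF Q False, of "d x"] by simp
qed simp

lemma sum_acceptance_weights:
  fixes d :: "'x \<Rightarrow> 'y::finite \<Rightarrow> real"
  assumes Q: "is_dist Q" and "0 \<le> z" "z \<le> 1"
  shows "(\<Sum>y\<in>UNIV. Q y * acceptance d Q z x y) = z"
proof -
  define q where "q = quantile (d x) Q z"
  obtain y0 where y0: "d x y0 = q"
    using quantile_mem(1)[OF Q \<open>z \<le> 1\<close>, of "d x"] unfolding q_def by auto
  have "Q y * acceptance d Q z x y
      = (if d x y < q then Q y else 0) + (if d x y = q then Q y else 0) * acceptance d Q z x y0" for y
    using acceptance_below_quantile[OF Q, where x = x and y = y]
      acceptance_above_quantile[OF Q \<open>z \<le> 1\<close>, where x = x and y = y]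
      acceptance_cong[of d x y y0] y0
    unfolding q_def by (cases "d x y < q"; cases "q < d x y") auto
  then have "(\<Sum>y\<in>UNIV. Q y * acceptance d Q z x y)
      = dist_prob Q {y. d x y < q} + dist_prob Q {y. d x y = q} * acceptance d Q z x y0"
    by (simp add: sum.distrib sum.If_cases dist_prob_def flip: sum_distrib_right)
  also have "\<dots> = dist_prob Q {y. d x y < q} + (z - dist_prob Q {y. d x y < q})"
    using mult_acceptance[OF Q, where d = d and x = x and y = y0 and z = z]
      quantile_mem(2)[OF Q \<open>z \<le> 1\<close>, of "d x"]
      dist_prob_less_quantile[OF \<open>0 \<le> z\<close>, where c = "d x" and Q = Q]
    unfolding y0 q_def by simp
  finally show ?thesis by simp
qed

lemma acceptance_weights_minimal:
  fixes d :: "'x \<Rightarrow> 'y::finite \<Rightarrow> real"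
  assumes Q: "is_dist Q" and z: "0 \<le> z" "z \<le> 1"
    and v: "\<And>y. 0 \<le> v y" "\<And>y. v y \<le> Q y" and "(\<Sum>y\<in>UNIV. v y) = z"
  shows "(\<Sum>y\<in>UNIV. Q y * acceptance d Q z x y * d x y) \<le> (\<Sum>y\<in>UNIV. v y * d x y)"
proof (rule bathtub_sum_le[where r = "quantile (d x) Q z" and Q = Q])
  show "Q y * acceptance d Q z x y = Q y" if "d x y < quantile (d x) Q z" for y
    using Q that by (rule acceptance_below_quantile)
  show "Q y * acceptance d Q z x y = 0" if "quantile (d x) Q z < d x y" for y
    using Q \<open>z \<le> 1\<close> that by (rule acceptance_above_quantile)
  show "(\<Sum>y\<in>UNIV. Q y * acceptance d Q z x y) = (\<Sum>y\<in>UNIV. v y)"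
    using sum_acceptance_weights[OF Q z] \<open>(\<Sum>y\<in>UNIV. v y) = z\<close> by simp
qed (use v in auto)

definition acceptance_cost :: "('x \<Rightarrow> 'y::finite \<Rightarrow> real) \<Rightarrow> ('y \<Rightarrow> real) \<Rightarrow> real \<Rightarrow> 'x \<Rightarrow> real" where
  "acceptance_cost d Q z x = (\<Sum>y\<in>UNIV. Q y * acceptance d Q z x y * d x y)"

lemma Dtilde_eq_sum_acceptance_cost:
  "Dtilde P d z Q = inverse z * (\<Sum>x\<in>UNIV. P x * acceptance_cost d Q z x)"
  by (simp add: Dtilde_def acceptance_cost_def acceptance_def sum_distrib_left mult_ac)

lemma acceptance_cost_convex:
  fixes d :: "'x \<Rightarrow> 'y::finite \<Rightarrow> real"
  assumes Q1: "is_dist Q1" and Q2: "is_dist Q2" and z: "0 \<le> z" "z \<le> 1"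
    and t: "0 \<le> t" "t \<le> 1"
  shows "acceptance_cost d (\<lambda>y. t * Q1 y + (1 - t) * Q2 y) z x
    \<le> t * acceptance_cost d Q1 z x + (1 - t) * acceptance_cost d Q2 z x"
proof -
  define w where "w Q y = Q y * acceptance d Q z x y" for Q y
  define v where "v y = t * w Q1 y + (1 - t) * w Q2 y" for y
  have w: "0 \<le> w Q y" "w Q y \<le> Q y" if "is_dist Q" for Q y
    using is_dist_nonneg[OF that, of y] acceptance_nonneg[of d Q z x y] acceptance_le_one[of d Q z x y]
    by (auto simp: w_def mult_left_le)
  have "acceptance_cost d (\<lambda>y. t * Q1 y + (1 - t) * Q2 y) z x \<le> (\<Sum>y\<in>UNIV. v y * d x y)"
    unfolding acceptance_cost_def
  proof (rule acceptance_weights_minimal[OF is_dist_convex_comb[OF Q1 Q2 t] z])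
    show "0 \<le> v y" "v y \<le> t * Q1 y + (1 - t) * Q2 y" for y
      using w[OF Q1, of y] w[OF Q2, of y] t unfolding v_def
      by (auto intro!: add_mono mult_left_mono)
    have "(\<Sum>y\<in>UNIV. v y) = t * (\<Sum>y\<in>UNIV. w Q1 y) + (1 - t) * (\<Sum>y\<in>UNIV. w Q2 y)"
      by (simp add: v_def sum.distrib sum_distrib_left)
    then show "(\<Sum>y\<in>UNIV. v y) = z"
      by (simp add: w_def sum_acceptance_weights[OF Q1 z] sum_acceptance_weights[OF Q2 z] algebra_simps)
  qed
  also have "\<dots> = (\<Sum>y\<in>UNIV. t * (Q1 y * acceptance d Q1 z x y * d x y)
      + (1 - t) * (Q2 y * acceptance d Q2 z x y * d x y))"
    by (rule sum.cong) (simp_all add: v_def w_def algebra_simps)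
  also have "\<dots> = t * acceptance_cost d Q1 z x + (1 - t) * acceptance_cost d Q2 z x"
    by (simp add: acceptance_cost_def sum.distrib sum_distrib_left)
  finally show ?thesis .
qed

theorem corollary3:
  fixes P :: "'x::finite \<Rightarrow> real" and d :: "'x \<Rightarrow> 'y::finite \<Rightarrow> real" and z :: real
  assumes "is_dist P"
    and "\<And>x y. d x y \<ge> 0"
    and "0 < z" and "z \<le> 1"
  shows "\<forall>Q1 Q2 t. is_dist Q1 \<longrightarrow> is_dist Q2 \<longrightarrow> 0 \<le> t \<longrightarrow> t \<le> 1 \<longrightarrow>
           Dtilde P d z (\<lambda>y. t * Q1 y + (1 - t) * Q2 y)
             \<le> t * Dtilde P d z Q1 + (1 - t) * Dtilde P d z Q2"
proof (intro allI impI)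
  fix Q1 Q2 :: "'y \<Rightarrow> real" and t :: real
  assume Q1: "is_dist Q1" and Q2: "is_dist Q2" and t: "0 \<le> t" "t \<le> 1"
  let ?C = "\<lambda>Q x. acceptance_cost d Q z x"
  have "(\<Sum>x\<in>UNIV. P x * ?C (\<lambda>y. t * Q1 y + (1 - t) * Q2 y) x)
      \<le> (\<Sum>x\<in>UNIV. P x * (t * ?C Q1 x + (1 - t) * ?C Q2 x))"
    using acceptance_cost_convex[OF Q1 Q2 _ \<open>z \<le> 1\<close> t] is_dist_nonneg[OF \<open>is_dist P\<close>] \<open>0 < z\<close>
    by (intro sum_mono mult_left_mono) auto
  also have "\<dots> = t * (\<Sum>x\<in>UNIV. P x * ?C Q1 x) + (1 - t) * (\<Sum>x\<in>UNIV. P x * ?C Q2 x)"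
    by (simp add: distrib_left mult.left_commute sum.distrib sum_distrib_left)
  finally have "inverse z * (\<Sum>x\<in>UNIV. P x * ?C (\<lambda>y. t * Q1 y + (1 - t) * Q2 y) x)
      \<le> inverse z * (t * (\<Sum>x\<in>UNIV. P x * ?C Q1 x) + (1 - t) * (\<Sum>x\<in>UNIV. P x * ?C Q2 x))"
    by (rule mult_left_mono) (use \<open>0 < z\<close> in simp)
  then show "Dtilde P d z (\<lambda>y. t * Q1 y + (1 - t) * Q2 y)
      \<le> t * Dtilde P d z Q1 + (1 - t) * Dtilde P d z Q2"
    unfolding Dtilde_eq_sum_acceptance_cost by (simp add: distrib_left mult.left_commute)
qed

end
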